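(* Let $N\ge1$. For every $0\le m\le N$, $G^m\subseteq F_{N-m}(N)$.
   Context: $\mathfrak g$ is a finite-dimensional simple complex Lie algebra, $\hat{\mathfrak g}$ its affine Kac–Moody algebra, $L$ the basic representation with highest weight vector $v_0$: $(\mathfrak g\otimes\mathbb C[t])v_0=0$. $e_\theta$ is a highest weight vector of the adjoint representation of $\mathfrak g$. PBW filtration: $F_{-1}=0$, $F_0=\mathbb Cv_0$, $F_{m+1}=F_m+\mathrm{span}\{(x\otimes t^{-i})w: x\in\mathfrak g,i>0,w\in F_m\}$. $v_N=(e_\theta\otimes t^{-N})^Nv_0$, $D(N)=U(\mathfrak g\otimes\mathbb C[t])v_N$, $F_m(N)=D(N)\cap F_m$. The $t^N$-filtration on $D(N)$: $\mathcal U^0=U(\mathfrak g\otimes\mathbb C[t])$, $\mathcal U^{j+1}=(\mathfrak g\otimes t^N\mathbb C[t])\,\mathcal U^j$, $G^j=\mathcal U^jv_N$. *)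

theory Defs
  imports Complex_Main
begin

text \<open>A complex vector space is given by its scalar multiplication sg (locale vector_space
  from HOL.Vector_Spaces); the Lie bracket is br.\<close>

definition lie_algebra :: "(complex \<Rightarrow> 'g::ab_group_add \<Rightarrow> 'g) \<Rightarrow> ('g \<Rightarrow> 'g \<Rightarrow> 'g) \<Rightarrow> bool" where
  "lie_algebra sg br \<longleftrightarrow>
     vector_space sg \<and>
     (\<forall>x y z. br (x + y) z = br x z + br y z) \<and>
     (\<forall>c x y. br (sg c x) y = sg c (br x y)) \<and>
     (\<forall>x. br x x = 0) \<and>
     (\<forall>x y z. br x (br y z) + br y (br z x) + br z (br x y) = 0)"

definition fin_dim :: "(complex \<Rightarrow> 'g::ab_group_add \<Rightarrow> 'g) \<Rightarrow> bool" where
  "fin_dim sg \<longleftrightarrow> (\<exists>Bs. finite Bs \<and> module.span sg Bs = UNIV)"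

definition lie_ideal :: "(complex \<Rightarrow> 'g::ab_group_add \<Rightarrow> 'g) \<Rightarrow> ('g \<Rightarrow> 'g \<Rightarrow> 'g) \<Rightarrow> 'g set \<Rightarrow> bool" where
  "lie_ideal sg br I \<longleftrightarrow> module.subspace sg I \<and> (\<forall>x y. y \<in> I \<longrightarrow> br x y \<in> I)"

definition simple_lie_algebra :: "(complex \<Rightarrow> 'g::ab_group_add \<Rightarrow> 'g) \<Rightarrow> ('g \<Rightarrow> 'g \<Rightarrow> 'g) \<Rightarrow> bool" where
  "simple_lie_algebra sg br \<longleftrightarrow>
     lie_algebra sg br \<and> fin_dim sg \<and> (\<exists>x y. br x y \<noteq> 0) \<and>
     (\<forall>I. lie_ideal sg br I \<longrightarrow> I = {0} \<or> I = UNIV)"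

definition lie_subalgebra :: "(complex \<Rightarrow> 'g::ab_group_add \<Rightarrow> 'g) \<Rightarrow> ('g \<Rightarrow> 'g \<Rightarrow> 'g) \<Rightarrow> 'g set \<Rightarrow> bool" where
  "lie_subalgebra sg br S \<longleftrightarrow> module.subspace sg S \<and> (\<forall>x\<in>S. \<forall>y\<in>S. br x y \<in> S)"

primrec derived_series :: "(complex \<Rightarrow> 'g::ab_group_add \<Rightarrow> 'g) \<Rightarrow> ('g \<Rightarrow> 'g \<Rightarrow> 'g) \<Rightarrow> 'g set \<Rightarrow> nat \<Rightarrow> 'g set" where
  "derived_series sg br S 0 = S"
| "derived_series sg br S (Suc k) =
     module.span sg {br x y | x y. x \<in> derived_series sg br S k \<and> y \<in> derived_series sg br S k}"

definition solvable_subalgebra :: "(complex \<Rightarrow> 'g::ab_group_add \<Rightarrow> 'g) \<Rightarrow> ('g \<Rightarrow> 'g \<Rightarrow> 'g) \<Rightarrow> 'g set \<Rightarrow> bool" where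
  "solvable_subalgebra sg br S \<longleftrightarrow> lie_subalgebra sg br S \<and> (\<exists>k. derived_series sg br S k = {0})"

definition borel_subalgebra :: "(complex \<Rightarrow> 'g::ab_group_add \<Rightarrow> 'g) \<Rightarrow> ('g \<Rightarrow> 'g \<Rightarrow> 'g) \<Rightarrow> 'g set \<Rightarrow> bool" where
  "borel_subalgebra sg br b \<longleftrightarrow> solvable_subalgebra sg br b \<and>
     (\<forall>S. solvable_subalgebra sg br S \<and> b \<subseteq> S \<longrightarrow> S = b)"

text \<open>A highest weight vector of the adjoint representation: a nonzero vector spanning a line
  stable under some Borel subalgebra (so e is a highest root vector e_theta).\<close>
definition highest_root_vector :: "(complex \<Rightarrow> 'g::ab_group_add \<Rightarrow> 'g) \<Rightarrow> ('g \<Rightarrow> 'g \<Rightarrow> 'g) \<Rightarrow> 'g \<Rightarrow> bool" where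
  "highest_root_vector sg br e \<longleftrightarrow> e \<noteq> 0 \<and>
     (\<exists>b. borel_subalgebra sg br b \<and> (\<forall>x\<in>b. \<exists>c. br x e = sg c e))"

text \<open>The normalized invariant form ( , ) with (theta,theta) = 2. Normalization is expressed via an
  sl2-triple (e_theta, f, h) through e_theta: then h is the coroot of theta and (theta,theta)=2 iff
  (e_theta, f) = 1.\<close>
definition normalized_form :: "(complex \<Rightarrow> 'g::ab_group_add \<Rightarrow> 'g) \<Rightarrow> ('g \<Rightarrow> 'g \<Rightarrow> 'g) \<Rightarrow> ('g \<Rightarrow> 'g \<Rightarrow> complex) \<Rightarrow> 'g \<Rightarrow> bool" where
  "normalized_form sg br B e \<longleftrightarrow>
     (\<forall>x y z. B (x + y) z = B x z + B y z) \<and>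
     (\<forall>c x y. B (sg c x) y = c * B x y) \<and>
     (\<forall>x y. B x y = B y x) \<and>
     (\<forall>x y z. B (br x y) z = B x (br y z)) \<and>
     (\<exists>f h. br e f = h \<and> br h e = sg 2 e \<and> br h f = sg (-2) f \<and> B e f = 1)"

text \<open>rho x i is the action of x \<otimes> t^i on the module (scalar multiplication sv); the central element
  K acts by 1, so the bracket
  [x\<otimes>t^i, y\<otimes>t^j] = [x,y]\<otimes>t^(i+j) + i \<delta>_{i+j,0} (x,y) K is imposed on operators.\<close>
definition level_one_module ::
  "(complex \<Rightarrow> 'g::ab_group_add \<Rightarrow> 'g) \<Rightarrow> ('g \<Rightarrow> 'g \<Rightarrow> 'g) \<Rightarrow> ('g \<Rightarrow> 'g \<Rightarrow> complex) \<Rightarrow>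
   (complex \<Rightarrow> 'v::ab_group_add \<Rightarrow> 'v) \<Rightarrow> ('g \<Rightarrow> int \<Rightarrow> 'v \<Rightarrow> 'v) \<Rightarrow> bool" where
  "level_one_module sg br B sv \<rho> \<longleftrightarrow>
     vector_space sv \<and>
     (\<forall>x i v w. \<rho> x i (v + w) = \<rho> x i v + \<rho> x i w) \<and>
     (\<forall>x i c v. \<rho> x i (sv c v) = sv c (\<rho> x i v)) \<and>
     (\<forall>x y i v. \<rho> (x + y) i v = \<rho> x i v + \<rho> y i v) \<and>
     (\<forall>c x i v. \<rho> (sg c x) i v = sv c (\<rho> x i v)) \<and>
     (\<forall>x y i j v. \<rho> x i (\<rho> y j v) - \<rho> y j (\<rho> x i v) =
        \<rho> (br x y) (i + j) v + (if i + j = 0 then sv (of_int i * B x y) v else 0))"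

text \<open>The basic representation: irreducible level one module generated by a nonzero vector v0
  annihilated by g \<otimes> C[t]. (This characterizes L(Lambda_0) up to isomorphism.)\<close>
definition basic_rep ::
  "(complex \<Rightarrow> 'g::ab_group_add \<Rightarrow> 'g) \<Rightarrow> ('g \<Rightarrow> 'g \<Rightarrow> 'g) \<Rightarrow> ('g \<Rightarrow> 'g \<Rightarrow> complex) \<Rightarrow>
   (complex \<Rightarrow> 'v::ab_group_add \<Rightarrow> 'v) \<Rightarrow> ('g \<Rightarrow> int \<Rightarrow> 'v \<Rightarrow> 'v) \<Rightarrow> 'v \<Rightarrow> bool" where
  "basic_rep sg br B sv \<rho> v0 \<longleftrightarrow>
     level_one_module sg br B sv \<rho> \<and> v0 \<noteq> 0 \<and>
     (\<forall>x i. 0 \<le> i \<longrightarrow> \<rho> x i v0 = 0) \<and>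
     (\<forall>W. module.subspace sv W \<and> (\<forall>x i w. w \<in> W \<longrightarrow> \<rho> x i w \<in> W) \<longrightarrow> W = {0} \<or> W = UNIV)"

primrec pbw_filt :: "(complex \<Rightarrow> 'v::ab_group_add \<Rightarrow> 'v) \<Rightarrow> ('g \<Rightarrow> int \<Rightarrow> 'v \<Rightarrow> 'v) \<Rightarrow> 'v \<Rightarrow> nat \<Rightarrow> 'v set" where
  "pbw_filt sv \<rho> v0 0 = module.span sv {v0}"
| "pbw_filt sv \<rho> v0 (Suc m) =
     module.span sv (pbw_filt sv \<rho> v0 m \<union> {\<rho> x (- i) w | x i w. 0 < i \<and> w \<in> pbw_filt sv \<rho> v0 m})"

definition vN :: "('g \<Rightarrow> int \<Rightarrow> 'v \<Rightarrow> 'v) \<Rightarrow> 'g \<Rightarrow> nat \<Rightarrow> 'v \<Rightarrow> 'v" where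
  "vN \<rho> e N v0 = (\<rho> e (- int N) ^^ N) v0"

text \<open>U(g \<otimes> C[t]) v : the smallest subspace containing v and stable under all x \<otimes> t^i, i \<ge> 0.\<close>
definition cyclic_pos :: "(complex \<Rightarrow> 'v::ab_group_add \<Rightarrow> 'v) \<Rightarrow> ('g \<Rightarrow> int \<Rightarrow> 'v \<Rightarrow> 'v) \<Rightarrow> 'v \<Rightarrow> 'v set" where
  "cyclic_pos sv \<rho> v = \<Inter>{W. module.subspace sv W \<and> v \<in> W \<and>
       (\<forall>x i w. 0 \<le> i \<and> w \<in> W \<longrightarrow> \<rho> x i w \<in> W)}"

text \<open>t^N-filtration: G^0 = U(g\<otimes>C[t]) v, G^(j+1) = (g \<otimes> t^N C[t]) U^j v
  = span{(x\<otimes>t^i) w : i \<ge> N, w \<in> G^j}.\<close>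
primrec tN_filt :: "(complex \<Rightarrow> 'v::ab_group_add \<Rightarrow> 'v) \<Rightarrow> ('g \<Rightarrow> int \<Rightarrow> 'v \<Rightarrow> 'v) \<Rightarrow> nat \<Rightarrow> 'v \<Rightarrow> nat \<Rightarrow> 'v set" where
  "tN_filt sv \<rho> N v 0 = cyclic_pos sv \<rho> v"
| "tN_filt sv \<rho> N v (Suc j) =
     module.span sv {\<rho> x i w | x i w. int N \<le> i \<and> w \<in> tN_filt sv \<rho> N v j}"

end

theory Submission
  imports Defs
begin

text \<open>Let H_k be the PBW filtration built only from the creation modes x \<otimes> t^(-j)
  with 0 < j \<le> N; clearly H_k \<subseteq> F_k and v_N \<in> H_N. Commuting a mode x \<otimes> t^i past
  y \<otimes> t^(-j) produces [x,y] \<otimes> t^(i-j) plus a central term. For i \<ge> 0 this shows that H_k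
  is stable under g \<otimes> C[t], so D(N) = G^0 \<subseteq> H_N; for i \<ge> N the mode i - j is
  nonnegative, so x \<otimes> t^i maps H_(k+1) into H_k, and by induction G^m \<subseteq> H_(N-m) \<subseteq> F_(N-m).\<close>

primrec bounded_pbw_filt ::
  "(complex \<Rightarrow> 'v::ab_group_add \<Rightarrow> 'v) \<Rightarrow> ('g \<Rightarrow> int \<Rightarrow> 'v \<Rightarrow> 'v) \<Rightarrow> 'v \<Rightarrow> nat \<Rightarrow> nat \<Rightarrow> 'v set" where
  "bounded_pbw_filt sv \<rho> v0 N 0 = module.span sv {v0}"
| "bounded_pbw_filt sv \<rho> v0 N (Suc k) =
     module.span sv (bounded_pbw_filt sv \<rho> v0 N k \<union>
       {\<rho> x (- j) w | x j w. 0 < j \<and> j \<le> int N \<and> w \<in> bounded_pbw_filt sv \<rho> v0 N k})"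

declare bounded_pbw_filt.simps(2) [simp del]

locale level_one_action = vector_space sv for sv :: "complex \<Rightarrow> 'v::ab_group_add \<Rightarrow> 'v" +
  fixes \<rho> :: "'g \<Rightarrow> int \<Rightarrow> 'v \<Rightarrow> 'v" and br :: "'g \<Rightarrow> 'g \<Rightarrow> 'g" and B :: "'g \<Rightarrow> 'g \<Rightarrow> complex"
  assumes \<rho>_add: "\<rho> x i (v + w) = \<rho> x i v + \<rho> x i w"
    and \<rho>_scale: "\<rho> x i (sv c v) = sv c (\<rho> x i v)"
    and \<rho>_commutator: "\<rho> x i (\<rho> y j v) - \<rho> y j (\<rho> x i v) =
        \<rho> (br x y) (i + j) v + (if i + j = 0 then sv (of_int i * B x y) v else 0)"
begin

lemma \<rho>_zero [simp]: "\<rho> x i 0 = 0"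
  using \<rho>_add[of x i 0 0] by simp

lemma \<rho>_span_into_subspace:
  assumes "subspace T" and "\<And>s. s \<in> S \<Longrightarrow> \<rho> x i s \<in> T" and "v \<in> span S"
  shows "\<rho> x i v \<in> T"
proof -
  have "subspace {v. \<rho> x i v \<in> T}"
    by (rule subspaceI) (auto simp: \<rho>_add \<rho>_scale assms(1) subspace_0 subspace_add subspace_scale)
  then have "span S \<subseteq> {v. \<rho> x i v \<in> T}"
    using assms(2) by (intro span_minimal) auto
  then show ?thesis using assms(3) by auto
qed

lemma \<rho>_commutator_mem:
  assumes T: "subspace T" and "w \<in> T"
    and "\<rho> y j (\<rho> x i w) \<in> T" and "\<rho> (br x y) (i + j) w \<in> T"
  shows "\<rho> x i (\<rho> y j w) \<in> T"
proof -
  have "\<rho> x i (\<rho> y j w) = \<rho> y j (\<rho> x i w) + \<rho> (br x y) (i + j) w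
      + (if i + j = 0 then sv (of_int i * B x y) w else 0)"
    using \<rho>_commutator[of x i y j w] by (simp add: algebra_simps)
  then show ?thesis
    using assms by (simp add: subspace_add subspace_scale subspace_0)
qed

lemma cyclic_pos_subspace: "subspace (cyclic_pos sv \<rho> v)"
  unfolding cyclic_pos_def by (rule subspace_Inter) auto

lemma cyclic_pos_stable: "0 \<le> i \<Longrightarrow> w \<in> cyclic_pos sv \<rho> v \<Longrightarrow> \<rho> x i w \<in> cyclic_pos sv \<rho> v"
  unfolding cyclic_pos_def by auto

lemma cyclic_pos_minimal:
  "subspace W \<Longrightarrow> v \<in> W \<Longrightarrow> (\<And>x i w. 0 \<le> i \<Longrightarrow> w \<in> W \<Longrightarrow> \<rho> x i w \<in> W)
    \<Longrightarrow> cyclic_pos sv \<rho> v \<subseteq> W"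
  unfolding cyclic_pos_def by (intro Inter_lower) auto

lemma tN_filt_subset_cyclic_pos: "tN_filt sv \<rho> N v m \<subseteq> cyclic_pos sv \<rho> v"
proof (induction m)
  case 0
  then show ?case by simp
next
  case (Suc m)
  have "\<rho> x i w \<in> cyclic_pos sv \<rho> v" if "int N \<le> i" "w \<in> tN_filt sv \<rho> N v m" for x i w
    using that Suc.IH cyclic_pos_stable by force
  then show ?case
    unfolding tN_filt.simps by (intro span_minimal cyclic_pos_subspace) auto
qed

end

locale vacuum_action = level_one_action +
  fixes v0
  assumes \<rho>_nonneg_vacuum: "0 \<le> i \<Longrightarrow> \<rho> x i v0 = 0"
begin

abbreviation H where
  "H N \<equiv> bounded_pbw_filt sv \<rho> v0 N"

lemma H_subspace [simp]: "subspace (H N k)"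
  by (cases k) (auto simp: bounded_pbw_filt.simps)

lemma H_Suc_mono: "H N k \<subseteq> H N (Suc k)"
  by (auto simp: bounded_pbw_filt.simps intro: span_base)

lemma H_creation: "0 < j \<Longrightarrow> j \<le> int N \<Longrightarrow> w \<in> H N k \<Longrightarrow> \<rho> y (- j) w \<in> H N (Suc k)"
  by (auto simp: bounded_pbw_filt.simps intro!: span_base)

lemma H_subset_pbw_filt: "H N k \<subseteq> pbw_filt sv \<rho> v0 k"
proof (induction k)
  case 0
  then show ?case by simp
next
  case (Suc k)
  then show ?case
    by (simp only: bounded_pbw_filt.simps pbw_filt.simps) (intro span_mono, fastforce)
qed

lemma power_creation_mem_H: "0 < j \<Longrightarrow> j \<le> int N \<Longrightarrow> (\<rho> x (- j) ^^ n) v0 \<in> H N n"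
  by (induction n) (auto simp: span_base intro: H_creation)

lemma nonneg_mode_H0: "0 \<le> i \<Longrightarrow> w \<in> H N 0 \<Longrightarrow> \<rho> x i w = 0"
  by (auto simp: span_singleton \<rho>_scale \<rho>_nonneg_vacuum)

lemma mode_maps_H_Suc:
  assumes "w \<in> H N (Suc k)" and "subspace T"
    and "\<And>s. s \<in> H N k \<Longrightarrow> \<rho> x i s \<in> T"
    and "\<And>y j s. 0 < j \<Longrightarrow> j \<le> int N \<Longrightarrow> s \<in> H N k \<Longrightarrow> \<rho> x i (\<rho> y (- j) s) \<in> T"
  shows "\<rho> x i w \<in> T"
proof (rule \<rho>_span_into_subspace[OF assms(2)])
  show "w \<in> span (H N k \<union> {\<rho> y (- j) s | y j s. 0 < j \<and> j \<le> int N \<and> s \<in> H N k})"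
    using assms(1) by (simp add: bounded_pbw_filt.simps)
qed (use assms(3,4) in blast)

lemma nonneg_mode_H: "0 \<le> i \<Longrightarrow> w \<in> H N k \<Longrightarrow> \<rho> x i w \<in> H N k"
proof (induction k arbitrary: x i w)
  case 0
  then show ?case by (simp add: nonneg_mode_H0 span_zero)
next
  case (Suc k)
  show ?case
  proof (rule mode_maps_H_Suc[OF Suc.prems(2) H_subspace])
    show "\<rho> x i s \<in> H N (Suc k)" if "s \<in> H N k" for s
      using Suc.IH[OF Suc.prems(1) that] H_Suc_mono by blast
    fix y j s assume j: "0 < j" "j \<le> int N" and s: "s \<in> H N k"
    have bracket: "\<rho> (br x y) (i + - j) s \<in> H N (Suc k)"
    proof (cases "0 \<le> i + - j")
      case True
      then show ?thesis using Suc.IH s H_Suc_mono by blast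
    next
      case False
      then show ?thesis
        using H_creation[of "j - i" N s k "br x y"] j s Suc.prems(1) by simp
    qed
    have reordered: "\<rho> y (- j) (\<rho> x i s) \<in> H N (Suc k)"
      using H_creation[OF j Suc.IH[OF Suc.prems(1) s]] .
    have "s \<in> H N (Suc k)"
      using s H_Suc_mono by blast
    then show "\<rho> x i (\<rho> y (- j) s) \<in> H N (Suc k)"
      using reordered bracket by (rule \<rho>_commutator_mem[OF H_subspace])
  qed
qed

lemma high_mode_lowers_H_step:
  assumes i: "int N \<le> i" and w: "w \<in> H N (Suc k)"
    and lower: "\<And>y j s. 0 < j \<Longrightarrow> j \<le> int N \<Longrightarrow> s \<in> H N k \<Longrightarrow> \<rho> y (- j) (\<rho> x i s) \<in> H N k"
  shows "\<rho> x i w \<in> H N k"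
proof (rule mode_maps_H_Suc[OF w H_subspace])
  show "\<rho> x i s \<in> H N k" if "s \<in> H N k" for s
    using i by (intro nonneg_mode_H that) simp
  fix y j s assume j: "0 < j" "j \<le> int N" and s: "s \<in> H N k"
  have "\<rho> (br x y) (i + - j) s \<in> H N k"
    using i j by (intro nonneg_mode_H s) simp
  with s lower[OF j s] show "\<rho> x i (\<rho> y (- j) s) \<in> H N k"
    by (rule \<rho>_commutator_mem[OF H_subspace])
qed

lemma high_mode_lowers_H: "int N \<le> i \<Longrightarrow> w \<in> H N (Suc k) \<Longrightarrow> \<rho> x i w \<in> H N k"
proof (induction k arbitrary: x i w)
  case 0
  have "\<rho> y (- j) (\<rho> x i s) \<in> H N 0" if "s \<in> H N 0" for y j s
    using 0 that by (simp add: nonneg_mode_H0 span_zero)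
  with 0 show ?case
    by (rule high_mode_lowers_H_step)
next
  case (Suc k)
  have "\<rho> y (- j) (\<rho> x i s) \<in> H N (Suc k)" if "0 < j" "j \<le> int N" "s \<in> H N (Suc k)" for y j s
    using H_creation[OF that(1,2) Suc.IH[OF Suc.prems(1) that(3)]] .
  with Suc.prems show ?case
    by (rule high_mode_lowers_H_step)
qed

lemma cyclic_pos_subset_H: "v \<in> H N k \<Longrightarrow> cyclic_pos sv \<rho> v \<subseteq> H N k"
  by (intro cyclic_pos_minimal H_subspace nonneg_mode_H)

lemma tN_filt_subset_H: "v \<in> H N k \<Longrightarrow> m \<le> k \<Longrightarrow> tN_filt sv \<rho> N v m \<subseteq> H N (k - m)"
proof (induction m)
  case 0
  then show ?case using cyclic_pos_subset_H by simp
next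
  case (Suc m)
  have "k - m = Suc (k - Suc m)" using Suc.prems by simp
  then have "\<rho> x i w \<in> H N (k - Suc m)" if "int N \<le> i" "w \<in> tN_filt sv \<rho> N v m" for x i w
    using high_mode_lowers_H[OF that(1)] Suc that by auto
  then show ?case
    unfolding tN_filt.simps by (intro span_minimal H_subspace) auto
qed

end

theorem lemma4p3:
  fixes sg :: "complex \<Rightarrow> 'g::ab_group_add \<Rightarrow> 'g"
    and br :: "'g \<Rightarrow> 'g \<Rightarrow> 'g"
    and B :: "'g \<Rightarrow> 'g \<Rightarrow> complex"
    and e :: 'g
    and sv :: "complex \<Rightarrow> 'v::ab_group_add \<Rightarrow> 'v"
    and \<rho> :: "'g \<Rightarrow> int \<Rightarrow> 'v \<Rightarrow> 'v"
    and v0 :: 'v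
    and N m :: nat
  assumes "simple_lie_algebra sg br"
    and "highest_root_vector sg br e"
    and "normalized_form sg br B e"
    and "basic_rep sg br B sv \<rho> v0"
    and "1 \<le> N"
    and "m \<le> N"
  shows "tN_filt sv \<rho> N (vN \<rho> e N v0) m
           \<subseteq> cyclic_pos sv \<rho> (vN \<rho> e N v0) \<inter> pbw_filt sv \<rho> v0 (N - m)"
proof -
  have "vacuum_action sv \<rho> br B v0"
    using assms(4)
    unfolding vacuum_action_def vacuum_action_axioms_def level_one_action_def
      level_one_action_axioms_def basic_rep_def level_one_module_def
    by auto
  then interpret vacuum_action sv \<rho> br B v0 .
  have "vN \<rho> e N v0 \<in> H N N"
    unfolding vN_def using assms(5) by (intro power_creation_mem_H) auto
  then show ?thesis
    using tN_filt_subset_cyclic_pos tN_filt_subset_H[OF _ assms(6)] H_subset_pbw_filt by blast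
qed

end
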